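(* Let $N\ge 2$ and $x=(x_1,\dots,x_{2N})\in(\mathbb{R}_{>0})^{2N}$. Put $H_0(x)=0$ and, for $1\le k\le N$, $$H_k(x)=\min_{\substack{1\le i_1\triangleleft i_2\triangleleft\cdots\triangleleft i_k\le 2N\\ (i_1,i_k)\neq(1,2N)}}\big(x_{i_1}+x_{i_2}+\cdots+x_{i_k}\big).$$ Then $H_k(x)+H_{k+2}(x)\ge 2H_{k+1}(x)$ for all $0\le k\le N-2$.
   Context: For integers $i,j$, $i\triangleleft j$ means $i+1<j$. The minimum runs over index tuples $1\le i_1<\dots<i_k\le 2N$ with consecutive indices differing by at least $2$, excluding tuples with $i_1=1$ and $i_k=2N$ simultaneously. *)

theory Defs
  imports Complex_Main
begin

definition tri :: "nat \<Rightarrow> nat \<Rightarrow> bool" where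
  "tri i j \<longleftrightarrow> i + 1 < j"

definition admissible :: "nat \<Rightarrow> nat \<Rightarrow> nat list \<Rightarrow> bool" where
  "admissible N k is \<longleftrightarrow>
     length is = k \<and> k \<ge> 1 \<and>
     (\<forall>j<k. 1 \<le> is ! j \<and> is ! j \<le> 2 * N) \<and>
     (\<forall>j. j + 1 < k \<longrightarrow> tri (is ! j) (is ! (j + 1))) \<and>
     (is ! 0, is ! (k - 1)) \<noteq> (1, 2 * N)"

definition H :: "nat \<Rightarrow> (nat \<Rightarrow> real) \<Rightarrow> nat \<Rightarrow> real" where
  "H N x k = (if k = 0 then 0
              else Min {(\<Sum>j<k. x (is ! j)) | is. admissible N k is})"

end

theory Submission
  imports Defs
begin

text \<open>
  \<open>H\<^sub>k(x)\<close> is the least weight of a \<open>k\<close>-element independent set of the cycle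
  \<open>1 - 2 - \<dots> - 2N - 1\<close>; the condition \<open>(i\<^sub>1, i\<^sub>k) \<noteq> (1, 2N)\<close> forbids the closing edge.
  Take optimal independent sets \<open>A\<close> of size \<open>k\<close> and \<open>B\<close> of size \<open>k + 2\<close>. Call an edge of
  the cycle free if it does not join \<open>A\<close> to \<open>B\<close>. Exchanging \<open>A\<close> and \<open>B\<close> on an arc between
  two free edges yields independent sets \<open>C\<close>, \<open>D\<close> with \<open>w(C) + w(D) = w(A) + w(B)\<close>.
  Between consecutive free edges the vertices of \<open>A \<union> B\<close> alternate, so the running
  difference \<open>|B \<inter> [1,t]| - |A \<inter> [1,t]|\<close> moves by at most one from free edge to free
  edge while it gains two around the whole cycle; a discrete intermediate value argument
  therefore gives an arc on which \<open>B\<close> has exactly one vertex more than \<open>A\<close>. Then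
  \<open>|C| = |D| = k + 1\<close> and \<open>2 H\<^sub>k\<^sub>+\<^sub>1 \<le> w(C) + w(D) = H\<^sub>k + H\<^sub>k\<^sub>+\<^sub>2\<close>.
\<close>

section \<open>Independent sets of a cycle\<close>

definition cycle_indep :: "nat \<Rightarrow> nat set \<Rightarrow> bool" where
  "cycle_indep n S \<longleftrightarrow> S \<subseteq> {1..n} \<and> (\<forall>i\<in>S. Suc i \<notin> S) \<and> \<not> (1 \<in> S \<and> n \<in> S)"

lemma cycle_indep_finite: "cycle_indep n S \<Longrightarrow> finite S"
  unfolding cycle_indep_def using finite_subset by blast

lemma finite_cycle_indep_sets: "finite {S. cycle_indep n S \<and> card S = k}"
  by (rule finite_subset[of _ "Pow {1..n}"]) (auto simp: cycle_indep_def)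

lemma cycle_indep_card_0_iff: "cycle_indep n S \<and> card S = 0 \<longleftrightarrow> S = {}"
proof -
  have "cycle_indep n {}" by (simp add: cycle_indep_def)
  then show ?thesis by (metis card.empty card_0_eq cycle_indep_finite)
qed

lemma cycle_indep_exists:
  assumes "2 * k \<le> n"
  obtains S where "cycle_indep n S" "card S = k"
proof -
  have "cycle_indep n ((\<lambda>i. 2 * i + 1) ` {..<k})"
    using assms unfolding cycle_indep_def by auto presburger+
  moreover have "card ((\<lambda>i. 2 * i + 1) ` {..<k}) = k"
    by (simp add: card_image inj_on_def)
  ultimately show ?thesis by (rule that)
qed

section \<open>Admissible tuples are sorted independent sets\<close>

lemma transp_tri: "transp tri"
  by (auto simp: transp_def tri_def)

lemma sorted_wrt_tri_iff:
  "sorted_wrt tri xs \<longleftrightarrow> sorted_wrt (<) xs \<and> (\<forall>i\<in>set xs. Suc i \<notin> set xs)"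
  by (induction xs) (auto simp: tri_def intro: Suc_lessI)

lemma strict_sorted_hd_le: "sorted_wrt (<) xs \<Longrightarrow> y \<in> set xs \<Longrightarrow> hd xs \<le> (y::nat)"
  by (cases xs) auto

lemma strict_sorted_le_last: "sorted_wrt (<) xs \<Longrightarrow> y \<in> set xs \<Longrightarrow> (y::nat) \<le> last xs"
  by (induction xs) (auto simp: less_imp_le)

lemma strict_sorted_hd_last_iff:
  fixes xs :: "nat list"
  assumes "sorted_wrt (<) xs" "set xs \<subseteq> {lo..hi}" "xs \<noteq> []"
  shows "hd xs = lo \<longleftrightarrow> lo \<in> set xs" and "last xs = hi \<longleftrightarrow> hi \<in> set xs"
  using assms strict_sorted_hd_le[OF assms(1)] strict_sorted_le_last[OF assms(1)]
  by (metis atLeastAtMost_iff hd_in_set last_in_set order_antisym subsetD)+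

lemma admissible_iff:
  "admissible N k xs \<longleftrightarrow>
     k \<ge> 1 \<and> length xs = k \<and> sorted_wrt tri xs \<and> cycle_indep (2 * N) (set xs)"
proof (cases "length xs = k \<and> k \<ge> 1")
  case True
  then have "xs \<noteq> []" by auto
  have range: "(\<forall>j<k. 1 \<le> xs ! j \<and> xs ! j \<le> 2 * N) \<longleftrightarrow> set xs \<subseteq> {1..2 * N}"
    using True by (auto simp: set_conv_nth)
  have steps: "(\<forall>j. j + 1 < k \<longrightarrow> tri (xs ! j) (xs ! (j + 1))) \<longleftrightarrow> sorted_wrt tri xs"
    using True by (simp add: sorted_wrt_iff_nth_Suc_transp[OF transp_tri])
  have "xs ! 0 = hd xs" "xs ! (k - 1) = last xs"
    using True \<open>xs \<noteq> []\<close> by (simp_all add: hd_conv_nth last_conv_nth)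
  then have ends: "(xs ! 0, xs ! (k - 1)) \<noteq> (1, 2 * N) \<longleftrightarrow> \<not> (1 \<in> set xs \<and> 2 * N \<in> set xs)"
    if "set xs \<subseteq> {1..2 * N}" "sorted_wrt tri xs"
    using strict_sorted_hd_last_iff[of xs 1 "2 * N"] that \<open>xs \<noteq> []\<close>
    by (simp add: sorted_wrt_tri_iff)
  show ?thesis
    using True range steps ends unfolding admissible_def cycle_indep_def sorted_wrt_tri_iff by blast
qed (auto simp: admissible_def)

lemma admissible_sum_eq:
  assumes "admissible N k xs"
  shows "(\<Sum>j<k. x (xs ! j)) = sum x (set xs)" and "card (set xs) = k"
proof -
  have "length xs = k" "distinct xs"
    using assms by (auto simp: admissible_iff sorted_wrt_tri_iff strict_sorted_iff)
  then show "(\<Sum>j<k. x (xs ! j)) = sum x (set xs)" "card (set xs) = k"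
    by (simp_all add: sum_list_sum_nth atLeast0LessThan distinct_card
        flip: sum_list_distinct_conv_sum_set)
qed

lemma admissible_sorted_list_of_set:
  assumes "cycle_indep (2 * N) S" "card S = k" "k \<ge> 1"
  shows "admissible N k (sorted_list_of_set S)"
  using assms cycle_indep_finite[OF assms(1)]
  by (simp add: admissible_iff sorted_wrt_tri_iff cycle_indep_def)

lemma H_eq_Min_cycle_indep:
  "H N x k = Min (sum x ` {S. cycle_indep (2 * N) S \<and> card S = k})"
proof (cases "k = 0")
  case True
  then show ?thesis by (simp add: H_def cycle_indep_card_0_iff)
next
  case False
  have "{(\<Sum>j<k. x (xs ! j)) | xs. admissible N k xs} =
        sum x ` {S. cycle_indep (2 * N) S \<and> card S = k}"
  proof (intro equalityI subsetI)
    fix v assume "v \<in> {(\<Sum>j<k. x (xs ! j)) | xs. admissible N k xs}"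
    then obtain xs where xs: "admissible N k xs" "v = (\<Sum>j<k. x (xs ! j))" by blast
    then have "cycle_indep (2 * N) (set xs)" by (simp add: admissible_iff)
    with xs admissible_sum_eq[OF xs(1)]
    show "v \<in> sum x ` {S. cycle_indep (2 * N) S \<and> card S = k}" by (intro image_eqI) simp_all
  next
    fix v assume "v \<in> sum x ` {S. cycle_indep (2 * N) S \<and> card S = k}"
    then obtain S where S: "cycle_indep (2 * N) S" "card S = k" "v = sum x S" by blast
    then have adm: "admissible N k (sorted_list_of_set S)"
      using False by (intro admissible_sorted_list_of_set) auto
    have "(\<Sum>j<k. x (sorted_list_of_set S ! j)) = v"
      using admissible_sum_eq(1)[OF adm] S by (simp add: cycle_indep_finite)
    with adm show "v \<in> {(\<Sum>j<k. x (xs ! j)) | xs. admissible N k xs}" by blast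
  qed
  with False show ?thesis by (simp add: H_def)
qed

lemma H_le_sum: "cycle_indep (2 * N) S \<Longrightarrow> card S = k \<Longrightarrow> H N x k \<le> sum x S"
  unfolding H_eq_Min_cycle_indep by (rule Min_le) (auto intro: finite_cycle_indep_sets)

lemma H_attained:
  assumes "k \<le> N"
  obtains S where "cycle_indep (2 * N) S" "card S = k" "H N x k = sum x S"
proof -
  obtain S where "cycle_indep (2 * N) S" "card S = k"
    using cycle_indep_exists[of k "2 * N"] assms by auto
  then have "sum x ` {S. cycle_indep (2 * N) S \<and> card S = k} \<noteq> {}" by blast
  then have "H N x k \<in> sum x ` {S. cycle_indep (2 * N) S \<and> card S = k}"
    unfolding H_eq_Min_cycle_indep by (intro Min_in finite_imageI finite_cycle_indep_sets)
  then show ?thesis using that by blast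
qed

section \<open>Exchange between independent sets\<close>

text \<open>Cut \<open>c\<close> is the edge between \<open>c\<close> and \<open>c + 1\<close>; the cuts \<open>0\<close> and \<open>n\<close> both denote the
  closing edge \<open>{n, 1}\<close>, so that arcs are the intervals \<open>{s<..t}\<close> with \<open>s < t \<le> n\<close>.\<close>

definition cut_edge :: "nat \<Rightarrow> nat \<Rightarrow> nat \<times> nat" where
  "cut_edge n c = (if c = 0 \<or> c = n then (n, 1) else (c, Suc c))"

definition free_cut :: "nat \<Rightarrow> nat set \<Rightarrow> nat set \<Rightarrow> nat \<Rightarrow> bool" where
  "free_cut n A B c \<longleftrightarrow>
     (case cut_edge n c of (u, v) \<Rightarrow> \<not> (u \<in> A \<and> v \<in> B) \<and> \<not> (u \<in> B \<and> v \<in> A))"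

definition balance :: "nat set \<Rightarrow> nat set \<Rightarrow> nat \<Rightarrow> int" where
  "balance A B i = of_bool (i \<in> B) - of_bool (i \<in> A)"

definition excess :: "nat set \<Rightarrow> nat set \<Rightarrow> nat \<Rightarrow> int" where
  "excess A B t = (\<Sum>i\<in>{1..t}. balance A B i)"

lemma free_cut_swap: "free_cut n B A c = free_cut n A B c"
  by (auto simp: free_cut_def split: prod.splits)

lemma free_cut_inner:
  "0 < c \<Longrightarrow> c < n \<Longrightarrow>
    free_cut n A B c \<longleftrightarrow> \<not> (c \<in> A \<and> Suc c \<in> B) \<and> \<not> (c \<in> B \<and> Suc c \<in> A)"
  by (simp add: free_cut_def cut_edge_def)

lemma free_cut_wrap:
  "c = 0 \<or> c = n \<Longrightarrow>
    free_cut n A B c \<longleftrightarrow> \<not> (n \<in> A \<and> 1 \<in> B) \<and> \<not> (n \<in> B \<and> 1 \<in> A)"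
  by (auto simp: free_cut_def cut_edge_def)

lemma free_cut_last_eq_first: "free_cut n A B n = free_cut n A B 0"
  by (simp add: free_cut_def cut_edge_def)

lemma balance_bounds: "-1 \<le> balance A B i" "balance A B i \<le> 1"
  by (auto simp: balance_def)

lemma sum_balance: "finite I \<Longrightarrow> sum (balance A B) I = int (card (B \<inter> I)) - int (card (A \<inter> I))"
  by (simp add: balance_def sum_subtractf of_bool_def sum.If_cases Int_commute)

lemma excess_0 [simp]: "excess A B 0 = 0"
  by (simp add: excess_def)

lemma excess_Suc: "excess A B (Suc t) = excess A B t + balance A B (Suc t)"
  by (simp add: excess_def)

lemma excess_add_interval:
  assumes "s \<le> t"
  shows "excess A B t = excess A B s + sum (balance A B) {s<..t}"
proof -
  have "{1..t} = {1..s} \<union> {s<..t}" using assms by auto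
  moreover have "sum (balance A B) ({1..s} \<union> {s<..t}) =
      sum (balance A B) {1..s} + sum (balance A B) {s<..t}"
    by (rule sum.union_disjoint) auto
  ultimately show ?thesis unfolding excess_def by simp
qed

lemma excess_total:
  assumes "cycle_indep n A" "cycle_indep n B"
  shows "excess A B n = int (card B) - int (card A)"
proof -
  have "A \<inter> {1..n} = A" "B \<inter> {1..n} = B" using assms by (auto simp: cycle_indep_def)
  then show ?thesis by (simp add: excess_def sum_balance)
qed

lemma balance_flips_at_blocked_cut:
  assumes "cycle_indep n A" "cycle_indep n B" "0 < c" "c < n" "\<not> free_cut n A B c"
  shows "balance A B (Suc c) = - balance A B c"
  using assms by (auto simp: cycle_indep_def free_cut_def cut_edge_def balance_def)

lemma excess_across_blocked_cuts:
  assumes A: "cycle_indep n A" and B: "cycle_indep n B"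
    and "s < b" "b \<le> n" and blocked: "\<forall>c. s < c \<and> c < b \<longrightarrow> \<not> free_cut n A B c"
  shows "2 * (excess A B b - excess A B s) = balance A B (Suc s) + balance A B b"
proof -
  have "Suc s \<le> b" using \<open>s < b\<close> by simp
  then show ?thesis using \<open>b \<le> n\<close> blocked
  proof (induction b rule: dec_induct)
    case base
    then show ?case by (simp add: excess_Suc)
  next
    case (step b)
    then have "balance A B (Suc b) = - balance A B b"
      by (intro balance_flips_at_blocked_cut[OF A B]) auto
    with step show ?case by (simp add: excess_Suc)
  qed
qed

lemma excess_step_between_free_cuts:
  assumes "cycle_indep n A" "cycle_indep n B"
    and "a < b" "b \<le> n" "\<forall>c. a < c \<and> c < b \<longrightarrow> \<not> free_cut n A B c"
  shows "excess A B b \<le> excess A B a + 1"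
  using excess_across_blocked_cuts[OF assms] balance_bounds[of A B "Suc a"] balance_bounds[of A B b]
  by arith

lemma discrete_intermediate_value:
  fixes f :: "nat \<Rightarrow> int"
  assumes "P s" "P u" "s \<le> u" "f s + 1 \<le> f u"
    and step: "\<And>a b. a < b \<Longrightarrow> b \<le> u \<Longrightarrow> P a \<Longrightarrow> P b \<Longrightarrow>
                 (\<forall>c. a < c \<and> c < b \<longrightarrow> \<not> P c) \<Longrightarrow> f b \<le> f a + 1"
  obtains t where "s < t" "t \<le> u" "P t" "f t = f s + 1"
proof -
  define T where "T = {t. s < t \<and> t \<le> u \<and> P t \<and> f s + 1 \<le> f t}"
  have "u \<in> T" using assms(2-4) by (cases "s = u") (auto simp: T_def)
  have "finite T" by (rule finite_subset[of _ "{..u}"]) (auto simp: T_def)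
  define t where "t = Min T"
  have t: "t \<in> T" "\<And>c. c \<in> T \<Longrightarrow> t \<le> c"
    using Min_in Min_le \<open>finite T\<close> \<open>u \<in> T\<close> unfolding t_def by blast+
  define C where "C = {c. s \<le> c \<and> c < t \<and> P c}"
  have "finite C" by (simp add: C_def)
  moreover have "s \<in> C" using t(1) assms(1) by (simp add: C_def T_def)
  ultimately have "Max C \<in> C" "\<And>c. c \<in> C \<Longrightarrow> c \<le> Max C"
    using Max_in Max_ge by blast+
  then obtain a where a: "s \<le> a" "a < t" "P a" and a_max: "\<And>c. s \<le> c \<Longrightarrow> c < t \<Longrightarrow> P c \<Longrightarrow> c \<le> a"
    unfolding C_def by blast
  have no_P_between: "\<forall>c. a < c \<and> c < t \<longrightarrow> \<not> P c"
    using a(1) a_max by (meson leD less_imp_le order_trans)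
  have "f a \<le> f s"
  proof (rule ccontr)
    assume "\<not> f a \<le> f s"
    then have "a \<in> T" using a t(1) by (cases "a = s") (auto simp: T_def)
    then show False using t(2) \<open>a < t\<close> by force
  qed
  moreover have "f t \<le> f a + 1"
    using a t(1) no_P_between by (intro step) (auto simp: T_def)
  ultimately show ?thesis using that t(1) by (auto simp: T_def)
qed

lemma inner_free_cut_exists:
  assumes "A \<subseteq> {1..n}" "B \<subseteq> {1..n}" "card A + card B < n" "2 \<le> n"
  obtains c where "0 < c" "c < n" "free_cut n A B c"
proof -
  have "finite A" "finite B" using assms(1,2) finite_subset by blast+
  then have "card (A \<union> B) < card {1..n}" using card_Un_le[of A B] assms(3) by simp
  then have "\<not> {1..n} \<subseteq> A \<union> B"
    using card_mono \<open>finite A\<close> \<open>finite B\<close> by (metis finite_UnI not_le)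
  then obtain p where p: "p \<in> {1..n}" "p \<notin> A" "p \<notin> B" by blast
  show ?thesis
  proof (cases "p = n")
    case True
    moreover have "0 < n - 1" "n - 1 < n" using assms(4) by simp_all
    ultimately have "free_cut n A B (n - 1)" using p by (simp add: free_cut_inner)
    moreover note \<open>0 < n - 1\<close> \<open>n - 1 < n\<close>
    ultimately show ?thesis using that by blast
  next
    case False
    then have "0 < p" "p < n" using p by auto
    moreover have "free_cut n A B p" using p \<open>0 < p\<close> \<open>p < n\<close> by (simp add: free_cut_inner)
    ultimately show ?thesis using that by blast
  qed
qed

lemma extremal_free_cuts:
  assumes A: "cycle_indep n A" and B: "cycle_indep n B"
    and card: "card A + card B < n" "2 \<le> n" and wrap: "\<not> free_cut n A B 0"
  obtains a b where "0 < a" "a \<le> b" "b < n" "free_cut n A B a" "free_cut n A B b"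
    "\<forall>d. 0 < d \<and> d < a \<longrightarrow> \<not> free_cut n A B d" "\<forall>d. b < d \<and> d < n \<longrightarrow> \<not> free_cut n A B d"
proof -
  define F where "F = {c. c \<le> n \<and> free_cut n A B c}"
  have "finite F" by (simp add: F_def)
  obtain c where "0 < c" "c < n" "free_cut n A B c"
    using inner_free_cut_exists[of A n B] A B card by (auto simp: cycle_indep_def)
  then have "c \<in> F" by (simp add: F_def)
  then have "F \<noteq> {}" by blast
  define a where "a = Min F"
  define b where "b = Max F"
  have "a \<in> F" "b \<in> F" using \<open>F \<noteq> {}\<close> \<open>finite F\<close> by (simp_all add: a_def b_def)
  have a_min: "a \<le> d" and b_max: "d \<le> b" if "d \<in> F" for d
    using \<open>finite F\<close> that by (simp_all add: a_def b_def)
  have "a \<le> b" using \<open>b \<in> F\<close> by (rule a_min)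
  have "0 < a" using \<open>a \<in> F\<close> wrap by (auto simp: F_def intro: gr0I)
  have "b < n" using \<open>b \<in> F\<close> wrap by (auto simp: F_def le_less free_cut_last_eq_first)
  have "\<not> free_cut n A B d" if "0 < d" "d < a" for d
    using a_min[of d] that \<open>a \<le> b\<close> \<open>b < n\<close> by (auto simp: F_def)
  moreover have "\<not> free_cut n A B d" if "b < d" "d < n" for d
    using b_max[of d] that by (auto simp: F_def)
  ultimately show ?thesis
    using that \<open>0 < a\<close> \<open>a \<le> b\<close> \<open>b < n\<close> \<open>a \<in> F\<close> \<open>b \<in> F\<close> by (simp add: F_def)
qed

lemma free_cuts_with_gain_across_wrap:
  assumes A: "cycle_indep n A" and B: "cycle_indep n B"
    and card: "card B = card A + 2" "card A + card B < n" and wrap: "\<not> free_cut n A B 0"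
  obtains a b where "a \<le> b" "b \<le> n" "free_cut n A B a" "free_cut n A B b"
    "excess A B a + 1 \<le> excess A B b"
proof -
  obtain a b where ab: "0 < a" "a \<le> b" "b < n" "free_cut n A B a" "free_cut n A B b"
    and below: "\<forall>d. 0 < d \<and> d < a \<longrightarrow> \<not> free_cut n A B d"
    and above: "\<forall>d. b < d \<and> d < n \<longrightarrow> \<not> free_cut n A B d"
    using extremal_free_cuts[OF A B card(2) _ wrap] card by auto
  have "2 * (excess A B a - excess A B 0) = balance A B (Suc 0) + balance A B a"
    using ab below by (intro excess_across_blocked_cuts[OF A B]) auto
  moreover have "2 * (excess A B n - excess A B b) = balance A B (Suc b) + balance A B n"
    using ab above by (intro excess_across_blocked_cuts[OF A B]) auto
  moreover have "balance A B (Suc 0) + balance A B n = 0"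
  proof -
    have "(n \<in> A \<and> 1 \<in> B) \<or> (n \<in> B \<and> 1 \<in> A)"
      using wrap by (simp add: free_cut_wrap)
    moreover have "\<not> (1 \<in> A \<and> n \<in> A)" "\<not> (1 \<in> B \<and> n \<in> B)"
      using A B by (simp_all add: cycle_indep_def)
    moreover have "n \<noteq> 1" using card by simp
    ultimately show ?thesis by (auto simp: balance_def)
  qed
  moreover have "excess A B n = 2" using excess_total[OF A B] card(1) by simp
  ultimately have "excess A B a + 1 \<le> excess A B b"
    using balance_bounds[of A B a] balance_bounds[of A B "Suc b"] by simp
  then show ?thesis using that ab by simp
qed

lemma free_cuts_with_unit_gain:
  assumes A: "cycle_indep n A" and B: "cycle_indep n B"
    and card: "card B = card A + 2" "card A + card B < n"
  obtains s t where "s < t" "t \<le> n" "free_cut n A B s" "free_cut n A B t"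
    "excess A B t = excess A B s + 1"
proof -
  obtain a b where ab: "a \<le> b" "b \<le> n" "free_cut n A B a" "free_cut n A B b"
    "excess A B a + 1 \<le> excess A B b"
  proof (cases "free_cut n A B 0")
    case True
    then show ?thesis
      using that[of 0 n] excess_total[OF A B] card(1) free_cut_last_eq_first[of n A B]
      by (simp add: excess_def)
  next
    case False
    then show ?thesis using free_cuts_with_gain_across_wrap[OF A B card] that by blast
  qed
  from ab(3,4,1,5) show ?thesis
  proof (rule discrete_intermediate_value[of "free_cut n A B"])
    fix c d assume "c < d" "d \<le> b" "\<forall>e. c < e \<and> e < d \<longrightarrow> \<not> free_cut n A B e"
    then show "excess A B d \<le> excess A B c + 1"
      using ab(2) by (intro excess_step_between_free_cuts[OF A B]) auto
  next
    fix t assume "a < t" "t \<le> b" "free_cut n A B t" "excess A B t = excess A B a + 1"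
    then show ?thesis using that[of a t] ab by simp
  qed
qed

lemma cycle_indep_swap_arc:
  assumes A: "cycle_indep n A" and B: "cycle_indep n B"
    and "s < t" "t \<le> n" and free: "free_cut n A B s" "free_cut n A B t"
  shows "cycle_indep n ((A - {s<..t}) \<union> (B \<inter> {s<..t}))" (is "cycle_indep n ?C")
proof -
  have at_t: "Suc t \<notin> A" if "t \<in> B"
  proof
    assume "Suc t \<in> A"
    then have "0 < t" "t < n" using A \<open>s < t\<close> by (auto simp: cycle_indep_def)
    then show False using free(2) \<open>t \<in> B\<close> \<open>Suc t \<in> A\<close> by (simp add: free_cut_inner)
  qed
  have at_s: "Suc s \<notin> B" if "s \<in> A"
  proof
    assume "Suc s \<in> B"
    have "0 < s" "s < n" using A \<open>s \<in> A\<close> \<open>s < t\<close> \<open>t \<le> n\<close> by (auto simp: cycle_indep_def)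
    then show False using free(1) \<open>s \<in> A\<close> \<open>Suc s \<in> B\<close> by (simp add: free_cut_inner)
  qed
  have "?C \<subseteq> {1..n}" using A B by (auto simp: cycle_indep_def)
  moreover have "Suc i \<notin> ?C" if i: "i \<in> ?C" for i
  proof
    assume Si: "Suc i \<in> ?C"
    show False
    proof (cases "s < i \<and> i \<le> t"; cases "s < Suc i \<and> Suc i \<le> t")
      assume "s < i \<and> i \<le> t" "\<not> (s < Suc i \<and> Suc i \<le> t)"
      then have "i = t" by linarith
      then show False using i Si at_t \<open>s < t\<close> by auto
    next
      assume "\<not> (s < i \<and> i \<le> t)" "s < Suc i \<and> Suc i \<le> t"
      then have "i = s" by linarith
      then show False using i Si at_s \<open>s < t\<close> by auto
    qed (use i Si A B in \<open>auto simp: cycle_indep_def\<close>)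
  qed
  moreover have "\<not> (1 \<in> ?C \<and> n \<in> ?C)"
  proof
    assume ends: "1 \<in> ?C \<and> n \<in> ?C"
    have "1 \<in> {s<..t} \<longleftrightarrow> s = 0" "n \<in> {s<..t} \<longleftrightarrow> t = n" using \<open>s < t\<close> \<open>t \<le> n\<close> by auto
    then show False
      using ends A B free by (cases "s = 0"; cases "t = n") (auto simp: cycle_indep_def free_cut_wrap)
  qed
  ultimately show ?thesis unfolding cycle_indep_def by blast
qed

lemma cycle_indep_exchange:
  fixes x :: "nat \<Rightarrow> 'a::comm_monoid_add"
  assumes A: "cycle_indep n A" and B: "cycle_indep n B"
    and card: "card B = card A + 2" "card A + card B < n"
  obtains C D where "cycle_indep n C" "cycle_indep n D"
    "card C = card A + 1" "card D = card A + 1" "sum x C + sum x D = sum x A + sum x B"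
proof -
  obtain s t where st: "s < t" "t \<le> n" "free_cut n A B s" "free_cut n A B t"
    "excess A B t = excess A B s + 1"
    using free_cuts_with_unit_gain[OF A B card] by blast
  define I where "I = {s<..t}"
  have "finite A" "finite B" using A B by (simp_all add: cycle_indep_finite)
  have "card (B \<inter> I) = card (A \<inter> I) + 1"
    using st(5) excess_add_interval[of s t A B] sum_balance[of I A B] st(1) by (simp add: I_def)
  define C where "C = (A - I) \<union> (B \<inter> I)"
  define D where "D = (B - I) \<union> (A \<inter> I)"
  have "cycle_indep n C" "cycle_indep n D"
    using st cycle_indep_swap_arc[OF A B] cycle_indep_swap_arc[OF B A] free_cut_swap
    by (auto simp: C_def D_def I_def)
  moreover have "card C = card (A - I) + card (B \<inter> I)" "card D = card (B - I) + card (A \<inter> I)"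
    using \<open>finite A\<close> \<open>finite B\<close> by (auto simp: C_def D_def intro: card_Un_disjoint)
  moreover have "card A = card (A \<inter> I) + card (A - I)" "card B = card (B \<inter> I) + card (B - I)"
    using \<open>finite A\<close> \<open>finite B\<close> by (simp_all add: card_Int_Diff)
  moreover have "sum x C = sum x (A - I) + sum x (B \<inter> I)" "sum x D = sum x (B - I) + sum x (A \<inter> I)"
    using \<open>finite A\<close> \<open>finite B\<close> by (auto simp: C_def D_def intro: sum.union_disjoint)
  moreover have "sum x A = sum x (A \<inter> I) + sum x (A - I)" "sum x B = sum x (B \<inter> I) + sum x (B - I)"
    using \<open>finite A\<close> \<open>finite B\<close> by (simp_all add: sum.Int_Diff)
  ultimately show ?thesis
    using that[of C D] \<open>card (B \<inter> I) = card (A \<inter> I) + 1\<close> card(1) by (simp add: ac_simps)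
qed

theorem mainTheorem5:
  fixes N :: nat and x :: "nat \<Rightarrow> real" and k :: nat
  assumes "N \<ge> 2"
    and "\<forall>i\<in>{1..2*N}. x i > 0"
    and "k \<le> N - 2"
  shows "H N x k + H N x (k + 2) \<ge> 2 * H N x (k + 1)"
proof -
  have "k + 2 \<le> N" using assms(1,3) by simp
  obtain A where A: "cycle_indep (2 * N) A" "card A = k" "H N x k = sum x A"
    using H_attained \<open>k + 2 \<le> N\<close> by (metis add_leD1)
  obtain B where B: "cycle_indep (2 * N) B" "card B = k + 2" "H N x (k + 2) = sum x B"
    using H_attained \<open>k + 2 \<le> N\<close> by metis
  obtain C D where "cycle_indep (2 * N) C" "cycle_indep (2 * N) D"
    "card C = k + 1" "card D = k + 1" "sum x C + sum x D = sum x A + sum x B"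
    using cycle_indep_exchange[OF A(1) B(1)] A(2) B(2) \<open>k + 2 \<le> N\<close> by auto
  then have "H N x (k + 1) \<le> sum x C" "H N x (k + 1) \<le> sum x D"
    by (simp_all add: H_le_sum)
  with A(3) B(3) \<open>sum x C + sum x D = sum x A + sum x B\<close> show ?thesis by linarith
qed

end
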